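(* Let $S$ be a $0$-left cancellative semigroup admitting least common multiples, and let $\pi$ be a representation of $S$ on a set $\Omega$ which respects least common multiples. Then the inverse subsemigroup $\mathcal I(\Omega,\pi)$ of $\mathcal I(\Omega)$ generated by $\{\pi_s:s\in S\}$ equals $$\{\pi_u f_\Lambda \pi_v^{-1} : \Lambda\subseteq\tilde S \text{ finite},\ \Lambda\cap S\neq\emptyset,\ u,v\in\Lambda\}.$$
   Context: $S$ is a semigroup with zero $0$; it is $0$-left cancellative if $st=sr\neq0$ implies $t=r$. Let $\tilde S=S\cup\{1\}$ where $1\notin S$ acts as an identity. For $s,t\in S$, $s$ divides $t$ ($s\mid t$) if $t\in s\tilde S$. An element $r\in S$ is a least common multiple of $s,t\in S$ if $sS\cap tS=rS$ and both $s\mid r$ and $t\mid r$; $S$ admits least common multiples if every pair of elements has one. $\mathcal I(\Omega)$ is the inverse semigroup of all partial bijections of $\Omega$. A representation of $S$ on $\Omega$ is a map $s\mapsto\pi_s\in\mathcal I(\Omega)$ with $\pi_0$ the empty map and $\pi_s\circ\pi_t=\pi_{st}$. Write $E_s$ for the range of $\pi_s$. $\pi$ respects least common multiples if $E_r=E_s\cap E_t$ whenever $r$ is a least common multiple of $s$ and $t$. Extend $\pi$ to $\tilde S$ by $\pi_1=\mathrm{id}_\Omega$. For $u\in\tilde S$ let $f_u=\pi_u^{-1}\pi_u$ (identity on the domain of $\pi_u$), and for finite nonempty $\Lambda\subseteq\tilde S$ let $f_\Lambda=\prod_{u\in\Lambda}f_u$. *)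

theory Defs
  imports Main
begin

text \<open>Semigroups with zero: a type of class semigroup_mult with mult_zero
  (0 * x = 0 = x * 0). The semigroup S is the whole carrier type.\<close>

definition zero_left_cancellative :: "('a::{semigroup_mult,mult_zero}) itself \<Rightarrow> bool" where
  "zero_left_cancellative _ \<longleftrightarrow> (\<forall>s t r::'a. s * t = s * r \<and> s * r \<noteq> 0 \<longrightarrow> t = r)"

text \<open>s divides t: t \<in> s S~, i.e. t = s or t = s r for some r.\<close>
definition sdivides :: "'a::semigroup_mult \<Rightarrow> 'a \<Rightarrow> bool" where
  "sdivides s t \<longleftrightarrow> t = s \<or> (\<exists>r. t = s * r)"

definition is_lcm :: "'a::semigroup_mult \<Rightarrow> 'a \<Rightarrow> 'a \<Rightarrow> bool" where
  "is_lcm r s t \<longleftrightarrow> range ((*) s) \<inter> range ((*) t) = range ((*) r) \<and> sdivides s r \<and> sdivides t r"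

definition admits_lcm :: "('a::semigroup_mult) itself \<Rightarrow> bool" where
  "admits_lcm _ \<longleftrightarrow> (\<forall>s t::'a. \<exists>r. is_lcm r s t)"

definition pbij :: "'b set \<Rightarrow> ('b \<rightharpoonup> 'b) set" where
  "pbij \<Omega> = {f. dom f \<subseteq> \<Omega> \<and> ran f \<subseteq> \<Omega> \<and> inj_on f (dom f)}"

definition pinv :: "('b \<rightharpoonup> 'b) \<Rightarrow> ('b \<rightharpoonup> 'b)" where
  "pinv f = (\<lambda>y. if y \<in> ran f then Some (THE x. f x = Some y) else None)"

definition is_representation :: "'b set \<Rightarrow> ('a::{semigroup_mult,mult_zero} \<Rightarrow> ('b \<rightharpoonup> 'b)) \<Rightarrow> bool" where
  "is_representation \<Omega> \<pi> \<longleftrightarrow> (\<forall>s. \<pi> s \<in> pbij \<Omega>) \<and> \<pi> 0 = Map.empty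
     \<and> (\<forall>s t. \<pi> s \<circ>\<^sub>m \<pi> t = \<pi> (s * t))"

definition respects_lcm :: "('a::{semigroup_mult,mult_zero} \<Rightarrow> ('b \<rightharpoonup> 'b)) \<Rightarrow> bool" where
  "respects_lcm \<pi> \<longleftrightarrow> (\<forall>r s t. is_lcm r s t \<longrightarrow> ran (\<pi> r) = ran (\<pi> s) \<inter> ran (\<pi> t))"

text \<open>S~ = S \<union> {1} is modelled as 'a option, with None playing the role of 1.\<close>
definition pi_tilde :: "'b set \<Rightarrow> ('a \<Rightarrow> ('b \<rightharpoonup> 'b)) \<Rightarrow> 'a option \<Rightarrow> ('b \<rightharpoonup> 'b)" where
  "pi_tilde \<Omega> \<pi> u = (case u of None \<Rightarrow> (\<lambda>x. if x \<in> \<Omega> then Some x else None) | Some s \<Rightarrow> \<pi> s)"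

definition f_elem :: "'b set \<Rightarrow> ('a \<Rightarrow> ('b \<rightharpoonup> 'b)) \<Rightarrow> 'a option \<Rightarrow> ('b \<rightharpoonup> 'b)" where
  "f_elem \<Omega> \<pi> u = pinv (pi_tilde \<Omega> \<pi> u) \<circ>\<^sub>m pi_tilde \<Omega> \<pi> u"

text \<open>f_\<Lambda> = product of the commuting idempotents f_u, u \<in> \<Lambda>: the identity on
  the intersection of their domains (within \<Omega>).\<close>
definition f_set :: "'b set \<Rightarrow> ('a \<Rightarrow> ('b \<rightharpoonup> 'b)) \<Rightarrow> 'a option set \<Rightarrow> ('b \<rightharpoonup> 'b)" where
  "f_set \<Omega> \<pi> \<Lambda> = (\<lambda>x. if x \<in> \<Omega> \<and> (\<forall>u\<in>\<Lambda>. x \<in> dom (f_elem \<Omega> \<pi> u)) then Some x else None)"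

inductive_set gen_inv :: "('a \<Rightarrow> ('b \<rightharpoonup> 'b)) \<Rightarrow> ('b \<rightharpoonup> 'b) set" for \<pi> where
  base: "\<pi> s \<in> gen_inv \<pi>"
| comp: "f \<in> gen_inv \<pi> \<Longrightarrow> g \<in> gen_inv \<pi> \<Longrightarrow> f \<circ>\<^sub>m g \<in> gen_inv \<pi>"
| inv: "f \<in> gen_inv \<pi> \<Longrightarrow> pinv f \<in> gen_inv \<pi>"

end

theory Submission
  imports Defs
begin

text \<open>Every map \<open>\<pi>\<^sub>u f\<^sub>\<Lambda> \<pi>\<^sub>v\<inverse>\<close> is a product of generators and their inverses, since
  \<open>f\<^sub>\<Lambda>\<close> is a product of the idempotents \<open>\<pi>\<^sub>s\<inverse>\<pi>\<^sub>s\<close>, \<open>Some s \<in> \<Lambda>\<close>. Conversely, these maps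
  include \<open>\<pi>\<^sub>s = \<pi>\<^sub>s f\<^bsub>{s,1}\<^esub> \<pi>\<^sub>1\<inverse>\<close>, are closed under inversion (swap \<open>u\<close> and \<open>v\<close>), and
  under composition: in \<open>\<pi>\<^sub>u f\<^sub>\<Lambda> \<pi>\<^sub>v\<inverse> \<pi>\<^sub>w f\<^sub>M \<pi>\<^sub>z\<inverse>\<close> choose \<open>va = wb\<close> with
  \<open>E\<^sub>v \<inter> E\<^sub>w = E\<^bsub>va\<^esub>\<close> (a least common multiple, if \<open>v, w \<in> S\<close>). Then
  \<open>\<pi>\<^sub>v\<inverse>\<pi>\<^sub>w = \<pi>\<^sub>a \<pi>\<^sub>b\<inverse>\<close> on the relevant points, and pushing \<open>\<pi>\<^sub>a\<close>, \<open>\<pi>\<^sub>b\<close> through the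
  idempotents gives \<open>\<pi>\<^bsub>ua\<^esub> f\<^bsub>\<Lambda>a \<union> Mb\<^esub> \<pi>\<^bsub>zb\<^esub>\<inverse>\<close>.\<close>

lemma pinv_Some_iff:
  assumes "inj_on f (dom f)"
  shows "pinv f y = Some x \<longleftrightarrow> f x = Some y"
proof
  assume h: "pinv f y = Some x"
  then have y: "y \<in> ran f" unfolding pinv_def by (auto split: if_splits)
  then obtain x0 where x0: "f x0 = Some y" by (auto simp: ran_def)
  have "(THE x. f x = Some y) = x0"
    by (rule the_equality) (use x0 assms in \<open>auto simp: inj_on_def domI\<close>)
  with h y x0 show "f x = Some y" unfolding pinv_def by auto
next
  assume h: "f x = Some y"
  have "(THE x. f x = Some y) = x"
    by (rule the_equality) (use h assms in \<open>auto simp: inj_on_def domI\<close>)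
  with h show "pinv f y = Some x" unfolding pinv_def by (auto intro: ranI)
qed

lemma map_eqI: "(\<And>x z. f x = Some z \<longleftrightarrow> g x = Some z) \<Longrightarrow> f = g"
  by (rule ext) (metis option.exhaust)

fun tilde_mult :: "'a::semigroup_mult option \<Rightarrow> 'a option \<Rightarrow> 'a option" where
  "tilde_mult None b = b"
| "tilde_mult (Some a) None = Some a"
| "tilde_mult (Some a) (Some b) = Some (a * b)"

lemma tilde_mult_Some_in_range: "tilde_mult (Some s) a \<in> range Some"
  by (cases a) auto

lemma sdivides_iff_tilde_mult: "sdivides s r \<longleftrightarrow> (\<exists>a. tilde_mult (Some s) a = Some r)"
proof
  assume "sdivides s r"
  then consider "r = s" | c where "r = s * c" unfolding sdivides_def by blast
  then show "\<exists>a. tilde_mult (Some s) a = Some r"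
    by cases (metis tilde_mult.simps(2), metis tilde_mult.simps(3))
next
  assume "\<exists>a. tilde_mult (Some s) a = Some r"
  then obtain a where "tilde_mult (Some s) a = Some r" ..
  then show "sdivides s r" unfolding sdivides_def by (cases a) auto
qed

lemma pi_tilde_None_Some_iff: "pi_tilde \<Omega> \<pi> None x = Some z \<longleftrightarrow> x \<in> \<Omega> \<and> z = x"
  by (auto simp: pi_tilde_def)

lemma pi_tilde_Some [simp]: "pi_tilde \<Omega> \<pi> (Some s) = \<pi> s"
  by (simp add: pi_tilde_def)

lemma ran_pi_tilde_None: "ran (pi_tilde \<Omega> \<pi> None) = \<Omega>"
  by (auto simp: ran_def pi_tilde_None_Some_iff)

lemma pi_tilde_None_comp: "ran g \<subseteq> \<Omega> \<Longrightarrow> pi_tilde \<Omega> \<pi> None \<circ>\<^sub>m g = g"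
  by (rule map_eqI) (auto simp: map_comp_Some_iff pi_tilde_None_Some_iff intro: ranI)

lemma comp_pi_tilde_None: "dom g \<subseteq> \<Omega> \<Longrightarrow> g \<circ>\<^sub>m pi_tilde \<Omega> \<pi> None = g"
  by (rule map_eqI) (auto simp: map_comp_Some_iff pi_tilde_None_Some_iff)

lemma pinv_pi_tilde_None: "pinv (pi_tilde \<Omega> \<pi> None) = pi_tilde \<Omega> \<pi> None"
proof (rule map_eqI)
  have "inj_on (pi_tilde \<Omega> \<pi> None) (dom (pi_tilde \<Omega> \<pi> None))"
    by (auto simp: inj_on_def pi_tilde_def split: if_splits)
  then show "pinv (pi_tilde \<Omega> \<pi> None) x = Some z \<longleftrightarrow> pi_tilde \<Omega> \<pi> None x = Some z" for x z
    by (auto simp: pinv_Some_iff pi_tilde_None_Some_iff)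
qed

definition pi_f_pinv :: "'b set \<Rightarrow> ('a \<Rightarrow> ('b \<rightharpoonup> 'b)) \<Rightarrow> 'a option set \<Rightarrow> 'a option \<Rightarrow> 'a option \<Rightarrow> ('b \<rightharpoonup> 'b)"
  where "pi_f_pinv \<Omega> \<pi> \<Lambda> u v = pi_tilde \<Omega> \<pi> u \<circ>\<^sub>m f_set \<Omega> \<pi> \<Lambda> \<circ>\<^sub>m pinv (pi_tilde \<Omega> \<pi> v)"

locale representation =
  fixes \<Omega> :: "'b set" and \<pi> :: "'a::{semigroup_mult,mult_zero} \<Rightarrow> ('b \<rightharpoonup> 'b)"
  assumes is_rep: "is_representation \<Omega> \<pi>"
begin

lemma pi_mult: "\<pi> s \<circ>\<^sub>m \<pi> t = \<pi> (s * t)"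
  using is_rep unfolding is_representation_def by auto

lemma dom_pi_tilde_subset: "dom (pi_tilde \<Omega> \<pi> u) \<subseteq> \<Omega>"
  using is_rep
  by (cases u) (auto simp: is_representation_def pbij_def pi_tilde_def split: if_splits)

lemma ran_pi_tilde_subset: "ran (pi_tilde \<Omega> \<pi> u) \<subseteq> \<Omega>"
  using is_rep by (cases u) (auto simp: ran_pi_tilde_None is_representation_def pbij_def)

lemma inj_on_pi_tilde: "inj_on (pi_tilde \<Omega> \<pi> u) (dom (pi_tilde \<Omega> \<pi> u))"
  using is_rep
  by (cases u) (auto simp: is_representation_def pbij_def pi_tilde_def inj_on_def split: if_splits)

lemma pi_tilde_inj:
  "pi_tilde \<Omega> \<pi> u x = Some z \<Longrightarrow> pi_tilde \<Omega> \<pi> u y = Some z \<Longrightarrow> x = y"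
  using inj_on_pi_tilde[of u] unfolding inj_on_def by (metis domI)

lemma pinv_pi_tilde_Some_iff: "pinv (pi_tilde \<Omega> \<pi> u) y = Some x \<longleftrightarrow> pi_tilde \<Omega> \<pi> u x = Some y"
  using pinv_Some_iff[OF inj_on_pi_tilde] .

lemma pi_tilde_mult: "pi_tilde \<Omega> \<pi> (tilde_mult u a) = pi_tilde \<Omega> \<pi> u \<circ>\<^sub>m pi_tilde \<Omega> \<pi> a"
proof (cases u)
  case None
  then show ?thesis by (simp add: pi_tilde_None_comp ran_pi_tilde_subset)
next
  case (Some s)
  then show ?thesis
    using dom_pi_tilde_subset[of u] by (cases a) (simp_all add: comp_pi_tilde_None pi_mult)
qed

lemma f_elem_Some_iff: "f_elem \<Omega> \<pi> u x = Some z \<longleftrightarrow> x \<in> dom (pi_tilde \<Omega> \<pi> u) \<and> z = x"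
  unfolding f_elem_def by (auto simp: map_comp_Some_iff pinv_pi_tilde_Some_iff intro: pi_tilde_inj)

lemma f_set_Some_iff:
  "f_set \<Omega> \<pi> \<Lambda> x = Some z \<longleftrightarrow> x \<in> \<Omega> \<and> (\<forall>u\<in>\<Lambda>. x \<in> dom (pi_tilde \<Omega> \<pi> u)) \<and> z = x"
  unfolding f_set_def using f_elem_Some_iff by auto

lemma pi_f_pinv_Some_iff:
  "pi_f_pinv \<Omega> \<pi> \<Lambda> u v x = Some z \<longleftrightarrow>
     (\<exists>y. pi_tilde \<Omega> \<pi> v y = Some x \<and> (\<forall>l\<in>\<Lambda>. y \<in> dom (pi_tilde \<Omega> \<pi> l)) \<and> pi_tilde \<Omega> \<pi> u y = Some z)"
  using dom_pi_tilde_subset[of v]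
  by (auto simp: pi_f_pinv_def map_comp_Some_iff f_set_Some_iff pinv_pi_tilde_Some_iff)

lemma pinv_pi_f_pinv: "pinv (pi_f_pinv \<Omega> \<pi> \<Lambda> u v) = pi_f_pinv \<Omega> \<pi> \<Lambda> v u"
proof (rule map_eqI)
  have inj: "inj_on (pi_f_pinv \<Omega> \<pi> \<Lambda> u v) (dom (pi_f_pinv \<Omega> \<pi> \<Lambda> u v))"
  proof (rule inj_onI)
    fix x1 x2
    assume "x1 \<in> dom (pi_f_pinv \<Omega> \<pi> \<Lambda> u v)" "pi_f_pinv \<Omega> \<pi> \<Lambda> u v x1 = pi_f_pinv \<Omega> \<pi> \<Lambda> u v x2"
    then obtain q where "pi_f_pinv \<Omega> \<pi> \<Lambda> u v x1 = Some q" "pi_f_pinv \<Omega> \<pi> \<Lambda> u v x2 = Some q"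
      by (metis domD)
    then obtain y1 y2 where "pi_tilde \<Omega> \<pi> v y1 = Some x1" "pi_tilde \<Omega> \<pi> u y1 = Some q"
      "pi_tilde \<Omega> \<pi> v y2 = Some x2" "pi_tilde \<Omega> \<pi> u y2 = Some q"
      unfolding pi_f_pinv_Some_iff by blast
    then show "x1 = x2" using pi_tilde_inj[of u y1 q y2] by simp
  qed
  show "pinv (pi_f_pinv \<Omega> \<pi> \<Lambda> u v) x = Some z \<longleftrightarrow> pi_f_pinv \<Omega> \<pi> \<Lambda> v u x = Some z" for x z
    unfolding pinv_Some_iff[OF inj] pi_f_pinv_Some_iff by blast
qed

lemma pi_eq_pi_f_pinv: "\<pi> s = pi_f_pinv \<Omega> \<pi> {Some s, None} (Some s) None"
  using dom_pi_tilde_subset[of "Some s"]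
  by (intro map_eqI) (auto simp: pi_f_pinv_Some_iff pi_tilde_None_Some_iff)

text \<open>The pullback square \<open>va = wb\<close> over \<open>E\<^sub>v \<inter> E\<^sub>w\<close>; for \<open>v, w \<in> S\<close> it is a least common multiple.\<close>
lemma pullback_exists:
  assumes "admits_lcm TYPE('a)" and "respects_lcm \<pi>"
  shows "\<exists>a b. tilde_mult v a = tilde_mult w b \<and>
    ran (pi_tilde \<Omega> \<pi> v) \<inter> ran (pi_tilde \<Omega> \<pi> w) = ran (pi_tilde \<Omega> \<pi> (tilde_mult v a))"
proof (cases v)
  case None
  then show ?thesis using ran_pi_tilde_subset[of w]
    by (intro exI[of _ w] exI[of _ None]) (cases w; auto simp: ran_pi_tilde_None)
next
  case (Some s)
  show ?thesis
  proof (cases w)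
    case None
    then show ?thesis using ran_pi_tilde_subset[of v]
      by (intro exI[of _ None] exI[of _ v]) (auto simp: \<open>v = Some s\<close> ran_pi_tilde_None)
  next
    case (Some t)
    obtain r where r: "is_lcm r s t" using assms(1) unfolding admits_lcm_def by blast
    then obtain a b where "tilde_mult (Some s) a = Some r" "tilde_mult (Some t) b = Some r"
      unfolding is_lcm_def sdivides_iff_tilde_mult by blast
    moreover have "ran (\<pi> r) = ran (\<pi> s) \<inter> ran (\<pi> t)"
      using assms(2) r unfolding respects_lcm_def by blast
    ultimately have "tilde_mult v a = tilde_mult w b \<and>
      ran (pi_tilde \<Omega> \<pi> v) \<inter> ran (pi_tilde \<Omega> \<pi> w) = ran (pi_tilde \<Omega> \<pi> (tilde_mult v a))"
      using \<open>v = Some s\<close> \<open>w = Some t\<close> by simp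
    then show ?thesis by blast
  qed
qed

lemma pullback_lift:
  assumes square: "tilde_mult v a = tilde_mult w b"
    and ran_eq: "ran (pi_tilde \<Omega> \<pi> v) \<inter> ran (pi_tilde \<Omega> \<pi> w) = ran (pi_tilde \<Omega> \<pi> (tilde_mult v a))"
    and "pi_tilde \<Omega> \<pi> v y = Some p" and "pi_tilde \<Omega> \<pi> w y' = Some p"
  shows "\<exists>t. pi_tilde \<Omega> \<pi> a t = Some y \<and> pi_tilde \<Omega> \<pi> b t = Some y'"
proof -
  have "p \<in> ran (pi_tilde \<Omega> \<pi> (tilde_mult v a))"
    using assms(3,4) ran_eq by (auto intro: ranI)
  then obtain t where t: "pi_tilde \<Omega> \<pi> (tilde_mult v a) t = Some p" by (auto simp: ran_def)
  then obtain y1 where "pi_tilde \<Omega> \<pi> a t = Some y1" "pi_tilde \<Omega> \<pi> v y1 = Some p"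
    by (auto simp: pi_tilde_mult map_comp_Some_iff)
  moreover obtain y2 where "pi_tilde \<Omega> \<pi> b t = Some y2" "pi_tilde \<Omega> \<pi> w y2 = Some p"
    using t by (auto simp: square pi_tilde_mult map_comp_Some_iff)
  ultimately show ?thesis using assms(3,4) by (metis pi_tilde_inj)
qed

lemma dom_tilde_mult_image_iff:
  assumes "pi_tilde \<Omega> \<pi> a t = Some y"
  shows "(\<forall>l\<in>(\<lambda>l. tilde_mult l a) ` \<Lambda>. t \<in> dom (pi_tilde \<Omega> \<pi> l)) \<longleftrightarrow> (\<forall>l\<in>\<Lambda>. y \<in> dom (pi_tilde \<Omega> \<pi> l))"
  using assms by (simp add: pi_tilde_mult dom_def map_comp_Some_iff)

lemma pi_f_pinv_tilde_mult_Some_iff: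
  "pi_f_pinv \<Omega> \<pi> ((\<lambda>l. tilde_mult l a) ` \<Lambda> \<union> (\<lambda>m. tilde_mult m b) ` M) (tilde_mult u a) (tilde_mult z b) x = Some q
   \<longleftrightarrow> (\<exists>t y y'. pi_tilde \<Omega> \<pi> a t = Some y' \<and> pi_tilde \<Omega> \<pi> b t = Some y \<and>
          pi_tilde \<Omega> \<pi> z y = Some x \<and> pi_tilde \<Omega> \<pi> u y' = Some q \<and>
          (\<forall>m\<in>M. y \<in> dom (pi_tilde \<Omega> \<pi> m)) \<and> (\<forall>l\<in>\<Lambda>. y' \<in> dom (pi_tilde \<Omega> \<pi> l)))"
  (is "?lhs \<longleftrightarrow> ?rhs")
proof
  assume ?lhs
  then obtain t where t: "pi_tilde \<Omega> \<pi> (tilde_mult z b) t = Some x" "pi_tilde \<Omega> \<pi> (tilde_mult u a) t = Some q"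
    "\<forall>l\<in>(\<lambda>l. tilde_mult l a) ` \<Lambda>. t \<in> dom (pi_tilde \<Omega> \<pi> l)"
    "\<forall>m\<in>(\<lambda>m. tilde_mult m b) ` M. t \<in> dom (pi_tilde \<Omega> \<pi> m)"
    unfolding pi_f_pinv_Some_iff ball_Un by blast
  obtain y where y: "pi_tilde \<Omega> \<pi> b t = Some y" "pi_tilde \<Omega> \<pi> z y = Some x"
    using t(1) unfolding pi_tilde_mult map_comp_Some_iff by blast
  obtain y' where y': "pi_tilde \<Omega> \<pi> a t = Some y'" "pi_tilde \<Omega> \<pi> u y' = Some q"
    using t(2) unfolding pi_tilde_mult map_comp_Some_iff by blast
  have "\<forall>m\<in>M. y \<in> dom (pi_tilde \<Omega> \<pi> m)" "\<forall>l\<in>\<Lambda>. y' \<in> dom (pi_tilde \<Omega> \<pi> l)"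
    using t(3,4) dom_tilde_mult_image_iff[OF y(1)] dom_tilde_mult_image_iff[OF y'(1)] by simp_all
  with y y' show ?rhs by blast
next
  assume ?rhs
  then obtain t y y' where y: "pi_tilde \<Omega> \<pi> b t = Some y" "pi_tilde \<Omega> \<pi> z y = Some x"
    "\<forall>m\<in>M. y \<in> dom (pi_tilde \<Omega> \<pi> m)"
    and y': "pi_tilde \<Omega> \<pi> a t = Some y'" "pi_tilde \<Omega> \<pi> u y' = Some q"
    "\<forall>l\<in>\<Lambda>. y' \<in> dom (pi_tilde \<Omega> \<pi> l)"
    by blast
  have "pi_tilde \<Omega> \<pi> (tilde_mult z b) t = Some x" "pi_tilde \<Omega> \<pi> (tilde_mult u a) t = Some q"
    using y y' by (simp_all add: pi_tilde_mult)
  moreover have "\<forall>l\<in>(\<lambda>l. tilde_mult l a) ` \<Lambda> \<union> (\<lambda>m. tilde_mult m b) ` M. t \<in> dom (pi_tilde \<Omega> \<pi> l)"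
    unfolding ball_Un dom_tilde_mult_image_iff[OF y(1)] dom_tilde_mult_image_iff[OF y'(1)]
    using y(3) y'(3) by blast
  ultimately show ?lhs unfolding pi_f_pinv_Some_iff by blast
qed

lemma pi_f_pinv_comp:
  assumes "v \<in> \<Lambda>" and square: "tilde_mult v a = tilde_mult w b"
    and ran_eq: "ran (pi_tilde \<Omega> \<pi> v) \<inter> ran (pi_tilde \<Omega> \<pi> w) = ran (pi_tilde \<Omega> \<pi> (tilde_mult v a))"
  shows "pi_f_pinv \<Omega> \<pi> \<Lambda> u v \<circ>\<^sub>m pi_f_pinv \<Omega> \<pi> M w z =
    pi_f_pinv \<Omega> \<pi> ((\<lambda>l. tilde_mult l a) ` \<Lambda> \<union> (\<lambda>m. tilde_mult m b) ` M) (tilde_mult u a) (tilde_mult z b)"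
proof (rule map_eqI)
  let ?P = "pi_tilde \<Omega> \<pi>"
  fix x q
  have "(\<exists>p. (\<exists>y. ?P z y = Some x \<and> (\<forall>m\<in>M. y \<in> dom (?P m)) \<and> ?P w y = Some p) \<and>
             (\<exists>y'. ?P v y' = Some p \<and> (\<forall>l\<in>\<Lambda>. y' \<in> dom (?P l)) \<and> ?P u y' = Some q))
    \<longleftrightarrow> (\<exists>t y y'. ?P a t = Some y' \<and> ?P b t = Some y \<and> ?P z y = Some x \<and> ?P u y' = Some q \<and>
             (\<forall>m\<in>M. y \<in> dom (?P m)) \<and> (\<forall>l\<in>\<Lambda>. y' \<in> dom (?P l)))"
    (is "?lhs \<longleftrightarrow> ?rhs")
  proof
    assume ?lhs
    then obtain p y y' where y: "?P z y = Some x" "\<forall>m\<in>M. y \<in> dom (?P m)" "?P w y = Some p"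
      and y': "?P v y' = Some p" "\<forall>l\<in>\<Lambda>. y' \<in> dom (?P l)" "?P u y' = Some q"
      by blast
    obtain t where "?P a t = Some y'" "?P b t = Some y"
      using pullback_lift[OF square ran_eq y'(1) y(3)] by blast
    with y y' show ?rhs by blast
  next
    assume ?rhs
    then obtain t y y' where t: "?P a t = Some y'" "?P b t = Some y" "?P z y = Some x"
      "?P u y' = Some q" "\<forall>m\<in>M. y \<in> dom (?P m)" "\<forall>l\<in>\<Lambda>. y' \<in> dom (?P l)" by blast
    then obtain p where p: "?P v y' = Some p" using \<open>v \<in> \<Lambda>\<close> by blast
    then have "?P (tilde_mult w b) t = Some p"
      using t(1) by (simp add: square[symmetric] pi_tilde_mult)
    then have "?P w y = Some p" using t(2) by (simp add: pi_tilde_mult)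
    with t p show ?lhs by blast
  qed
  then show "(pi_f_pinv \<Omega> \<pi> \<Lambda> u v \<circ>\<^sub>m pi_f_pinv \<Omega> \<pi> M w z) x = Some q \<longleftrightarrow>
    pi_f_pinv \<Omega> \<pi> ((\<lambda>l. tilde_mult l a) ` \<Lambda> \<union> (\<lambda>m. tilde_mult m b) ` M) (tilde_mult u a) (tilde_mult z b) x = Some q"
    unfolding map_comp_Some_iff pi_f_pinv_tilde_mult_Some_iff unfolding pi_f_pinv_Some_iff .
qed

lemma gen_inv_normal_form:
  assumes "admits_lcm TYPE('a)" and "respects_lcm \<pi>" and "f \<in> gen_inv \<pi>"
  shows "\<exists>\<Lambda> u v. f = pi_f_pinv \<Omega> \<pi> \<Lambda> u v \<and> finite \<Lambda> \<and> \<Lambda> \<inter> range Some \<noteq> {} \<and> u \<in> \<Lambda> \<and> v \<in> \<Lambda>"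
  using assms(3)
proof induction
  case (base s)
  show ?case using pi_eq_pi_f_pinv[of s] by blast
next
  case (comp f g)
  obtain \<Lambda> u v where f: "f = pi_f_pinv \<Omega> \<pi> \<Lambda> u v" "finite \<Lambda>" "\<Lambda> \<inter> range Some \<noteq> {}" "u \<in> \<Lambda>" "v \<in> \<Lambda>"
    using comp.IH(1) by blast
  obtain M w z where g: "g = pi_f_pinv \<Omega> \<pi> M w z" "finite M" "z \<in> M"
    using comp.IH(2) by blast
  obtain a b where ab: "tilde_mult v a = tilde_mult w b"
    "ran (pi_tilde \<Omega> \<pi> v) \<inter> ran (pi_tilde \<Omega> \<pi> w) = ran (pi_tilde \<Omega> \<pi> (tilde_mult v a))"
    using pullback_exists[OF assms(1,2)] by blast
  let ?M = "(\<lambda>l. tilde_mult l a) ` \<Lambda> \<union> (\<lambda>m. tilde_mult m b) ` M"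
  obtain s where "Some s \<in> \<Lambda>" using f(3) by blast
  then have "?M \<inter> range Some \<noteq> {}" using tilde_mult_Some_in_range[of s a] by blast
  moreover have "f \<circ>\<^sub>m g = pi_f_pinv \<Omega> \<pi> ?M (tilde_mult u a) (tilde_mult z b)"
    using pi_f_pinv_comp[OF f(5) ab] f(1) g(1) by simp
  ultimately show ?case using f(2,4) g(2,3) by blast
next
  case (inv f)
  then show ?case using pinv_pi_f_pinv by metis
qed

lemma f_set_insert: "f_set \<Omega> \<pi> (insert u \<Lambda>) = f_elem \<Omega> \<pi> u \<circ>\<^sub>m f_set \<Omega> \<pi> \<Lambda>"
  by (rule map_eqI) (auto simp: map_comp_Some_iff f_set_Some_iff f_elem_Some_iff)

lemma f_set_singleton: "f_set \<Omega> \<pi> {u} = f_elem \<Omega> \<pi> u"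
  using dom_pi_tilde_subset[of u]
  by (intro map_eqI) (auto simp: f_set_Some_iff f_elem_Some_iff)

lemma f_set_insert_None: "f_set \<Omega> \<pi> (insert None \<Lambda>) = f_set \<Omega> \<pi> \<Lambda>"
  by (rule map_eqI) (auto simp: f_set_Some_iff pi_tilde_None_Some_iff)

lemma f_set_in_gen_inv:
  assumes "finite \<Lambda>" and "\<Lambda> \<inter> range Some \<noteq> {}"
  shows "f_set \<Omega> \<pi> \<Lambda> \<in> gen_inv \<pi>"
proof -
  have gen: "f_set \<Omega> \<pi> (Some ` L) \<in> gen_inv \<pi>" if "finite L" "L \<noteq> {}" for L
    using that
  proof (induction L rule: finite_ne_induct)
    case (singleton s)
    then show ?case by (simp add: f_set_singleton f_elem_def gen_inv.intros)
  next
    case (insert s L)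
    then show ?case by (simp add: f_set_insert f_elem_def gen_inv.intros)
  qed
  have "insert None \<Lambda> = insert None (Some ` (Some -` \<Lambda>))"
    by (auto intro: option.exhaust)
  then have "f_set \<Omega> \<pi> \<Lambda> = f_set \<Omega> \<pi> (Some ` (Some -` \<Lambda>))"
    by (metis f_set_insert_None)
  moreover have "f_set \<Omega> \<pi> (Some ` (Some -` \<Lambda>)) \<in> gen_inv \<pi>"
    using assms by (intro gen) (auto simp: finite_vimageI)
  ultimately show ?thesis by (simp only:)
qed

lemma pi_tilde_comp_in_gen_inv:
  assumes "g \<in> gen_inv \<pi>" and "ran g \<subseteq> \<Omega>"
  shows "pi_tilde \<Omega> \<pi> u \<circ>\<^sub>m g \<in> gen_inv \<pi>"
  using assms by (cases u) (simp_all add: pi_tilde_None_comp gen_inv.intros)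

lemma comp_pinv_pi_tilde_in_gen_inv:
  assumes "g \<in> gen_inv \<pi>" and "dom g \<subseteq> \<Omega>"
  shows "g \<circ>\<^sub>m pinv (pi_tilde \<Omega> \<pi> v) \<in> gen_inv \<pi>"
  using assms by (cases v) (simp_all add: pinv_pi_tilde_None comp_pi_tilde_None gen_inv.intros)

lemma pi_f_pinv_in_gen_inv:
  assumes "finite \<Lambda>" and "\<Lambda> \<inter> range Some \<noteq> {}"
  shows "pi_f_pinv \<Omega> \<pi> \<Lambda> u v \<in> gen_inv \<pi>"
  unfolding pi_f_pinv_def
proof (rule comp_pinv_pi_tilde_in_gen_inv)
  show "pi_tilde \<Omega> \<pi> u \<circ>\<^sub>m f_set \<Omega> \<pi> \<Lambda> \<in> gen_inv \<pi>"
    using f_set_in_gen_inv[OF assms] by (rule pi_tilde_comp_in_gen_inv) (auto simp: ran_def f_set_Some_iff)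
  show "dom (pi_tilde \<Omega> \<pi> u \<circ>\<^sub>m f_set \<Omega> \<pi> \<Lambda>) \<subseteq> \<Omega>"
    by (auto simp: map_comp_Some_iff f_set_Some_iff)
qed

end

theorem theorem7p11:
  fixes \<Omega> :: "'b set" and \<pi> :: "'a::{semigroup_mult,mult_zero} \<Rightarrow> ('b \<rightharpoonup> 'b)"
  assumes "zero_left_cancellative TYPE('a)"
    and "admits_lcm TYPE('a)"
    and "is_representation \<Omega> \<pi>"
    and "respects_lcm \<pi>"
  shows "gen_inv \<pi> =
    {pi_tilde \<Omega> \<pi> u \<circ>\<^sub>m f_set \<Omega> \<pi> \<Lambda> \<circ>\<^sub>m pinv (pi_tilde \<Omega> \<pi> v) | \<Lambda> u v.
       finite \<Lambda> \<and> \<Lambda> \<inter> range Some \<noteq> {} \<and> u \<in> \<Lambda> \<and> v \<in> \<Lambda>}"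
proof -
  interpret representation \<Omega> \<pi> by unfold_locales (fact assms(3))
  show ?thesis
    using gen_inv_normal_form[OF assms(2,4)] pi_f_pinv_in_gen_inv
    unfolding pi_f_pinv_def by blast
qed

end
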